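(* Let $\mathcal{G}$ be a connected undirected weighted graph (nonzero real weights, possibly negative) such that $L(\mathcal{G})$ has exactly one zero eigenvalue. Let $\mathcal{T}$ be a spanning tree with cycle subgraph $\mathcal{C}$. Then $R_{(\mathcal{T},\mathcal{C})}WR_{(\mathcal{T},\mathcal{C})}^T$ and $L_{ess}(\mathcal{T})$ are invertible and the Moore–Penrose pseudo-inverse of $L(\mathcal{G})$ is $$L^{\dagger}(\mathcal{G})=(E_{\mathcal{T}}^L)^T\big(R_{(\mathcal{T},\mathcal{C})}WR_{(\mathcal{T},\mathcal{C})}^T\big)^{-1}E_{\mathcal{T}}^L=(E_{\mathcal{T}}^L)^T L_{ess}(\mathcal{T})^{-1}E_{\mathcal{T}}^T,$$ where $E_{\mathcal{T}}^L=L_e(\mathcal{T})^{-1}E_{\mathcal{T}}^T$.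
   Context: A weighted graph $\mathcal{G}=(\mathcal{V},\mathcal{E},\mathcal{W})$ has weights $\mathcal{W}:\mathcal{E}\to\mathbb{R}\setminus\{0\}$ collected in the diagonal matrix $W$. With an arbitrary edge orientation, the incidence matrix $E$ has in the column of edge $(i,j)$ entry $+1$ in row $i$, $-1$ in row $j$, $0$ elsewhere; $L(\mathcal{G})=EWE^T$. For a spanning tree $\mathcal{T}$, $\mathcal{C}$ is the subgraph of the remaining edges, edges ordered so $E=[E_{\mathcal{T}}\ E_{\mathcal{C}}]$ and $W$ correspondingly. $L_e(\mathcal{T})=E_{\mathcal{T}}^TE_{\mathcal{T}}$ (invertible), $E_{\mathcal{T}}^L=L_e(\mathcal{T})^{-1}E_{\mathcal{T}}^T$ is a left inverse of $E_{\mathcal{T}}$, $R_{(\mathcal{T},\mathcal{C})}=[\,I\ \ L_e(\mathcal{T})^{-1}E_{\mathcal{T}}^TE_{\mathcal{C}}\,]$, and $L_{ess}(\mathcal{T})=L_e(\mathcal{T})R_{(\mathcal{T},\mathcal{C})}WR_{(\mathcal{T},\mathcal{C})}^T$. *)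

theory Defs
  imports "Jordan_Normal_Form.Char_Poly"
begin

text \<open>Graphs: vertices are 0,...,n-1; edges are given as a list of ordered pairs (u,v)
  (the order fixes the arbitrary orientation, the position in the list fixes the edge ordering).\<close>

definition edge_adj :: "(nat \<times> nat) list \<Rightarrow> (nat \<times> nat) set" where
  "edge_adj es = {(u,v). (u,v) \<in> set es \<or> (v,u) \<in> set es}"

definition simple_graph :: "nat \<Rightarrow> (nat \<times> nat) list \<Rightarrow> bool" where
  "simple_graph n es \<longleftrightarrow> (\<forall>(u,v)\<in>set es. u < n \<and> v < n \<and> u \<noteq> v)
      \<and> distinct (map (\<lambda>(u,v). {u,v}) es)"

definition graph_connected :: "nat \<Rightarrow> (nat \<times> nat) list \<Rightarrow> bool" where
  "graph_connected n es \<longleftrightarrow> (\<forall>u<n. \<forall>v<n. (u,v) \<in> (edge_adj es)\<^sup>*)"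

text \<open>Acyclic: every edge is a bridge (removing it disconnects its endpoints).\<close>
definition acyclic_graph :: "(nat \<times> nat) list \<Rightarrow> bool" where
  "acyclic_graph es \<longleftrightarrow> (\<forall>k < length es.
      (fst (es ! k), snd (es ! k)) \<notin> (edge_adj (take k es @ drop (Suc k) es))\<^sup>*)"

definition spanning_tree :: "nat \<Rightarrow> (nat \<times> nat) list \<Rightarrow> bool" where
  "spanning_tree n es \<longleftrightarrow> graph_connected n es \<and> acyclic_graph es"

definition incidence :: "nat \<Rightarrow> (nat \<times> nat) list \<Rightarrow> real mat" where
  "incidence n es = mat n (length es)
     (\<lambda>(i,k). if fst (es ! k) = i then 1 else if snd (es ! k) = i then -1 else 0)"

definition weight_mat :: "real list \<Rightarrow> real mat" where
  "weight_mat ws = mat_diag (length ws) (\<lambda>i. ws ! i)"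

definition laplacian :: "nat \<Rightarrow> (nat \<times> nat) list \<Rightarrow> real list \<Rightarrow> real mat" where
  "laplacian n es ws = incidence n es * weight_mat ws * transpose_mat (incidence n es)"

definition append_cols :: "real mat \<Rightarrow> real mat \<Rightarrow> real mat" where
  "append_cols A B = mat (dim_row A) (dim_col A + dim_col B)
     (\<lambda>(i,j). if j < dim_col A then A $$ (i,j) else B $$ (i, j - dim_col A))"

definition minv :: "real mat \<Rightarrow> real mat" where
  "minv A = (THE B. B \<in> carrier_mat (dim_row A) (dim_row A)
               \<and> A * B = 1\<^sub>m (dim_row A) \<and> B * A = 1\<^sub>m (dim_row A))"

definition pinv :: "real mat \<Rightarrow> real mat" where
  "pinv A = (THE X. X \<in> carrier_mat (dim_col A) (dim_row A)
      \<and> A * X * A = A \<and> X * A * X = X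
      \<and> transpose_mat (A * X) = A * X \<and> transpose_mat (X * A) = X * A)"

definition edge_laplacian_T :: "nat \<Rightarrow> (nat \<times> nat) list \<Rightarrow> real mat" where
  "edge_laplacian_T n eT = transpose_mat (incidence n eT) * incidence n eT"

definition left_inv_T :: "nat \<Rightarrow> (nat \<times> nat) list \<Rightarrow> real mat" where
  "left_inv_T n eT = minv (edge_laplacian_T n eT) * transpose_mat (incidence n eT)"

definition R_TC :: "nat \<Rightarrow> (nat \<times> nat) list \<Rightarrow> (nat \<times> nat) list \<Rightarrow> real mat" where
  "R_TC n eT eC = append_cols (1\<^sub>m (length eT))
      (minv (edge_laplacian_T n eT) * transpose_mat (incidence n eT) * incidence n eC)"

definition L_ess :: "nat \<Rightarrow> (nat \<times> nat) list \<Rightarrow> (nat \<times> nat) list \<Rightarrow> real list \<Rightarrow> real mat" where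
  "L_ess n eT eC ws = edge_laplacian_T n eT *
      (R_TC n eT eC * weight_mat ws * transpose_mat (R_TC n eT eC))"

end

theory Submission
  imports Defs
begin

(* Write E_T, E_C for the incidence matrices of the tree and of the remaining
   edges.  Since T is acyclic, E_T is injective, so L_e(T) = E_T^T E_T is invertible; since T
   is connected, every column of E_C (a difference of two unit vectors) lies in the range of
   E_T.  Hence E_C = E_T X with X = L_e(T)^-1 E_T^T E_C, i.e. E = E_T R, and therefore
   L(G) = E_T M E_T^T with M = R W R^T.  Applied to L(G) = E_T M E_T^T this shows
   that M is nonsingular, because E_T^T annihilates constant vectors. *)

section \<open>Matrix algebra\<close>

text \<open>Associativity and the transpose of a product with the dimension side conditions stated
  as equations, so that the simplifier can discharge them from carrier facts.\<close>

lemma mult_assoc_dims: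
  fixes A B C :: "'a :: semiring_0 mat"
  shows "dim_col A = dim_row B \<Longrightarrow> dim_col B = dim_row C \<Longrightarrow> A * B * C = A * (B * C)"
  by (rule assoc_mult_mat[of A "dim_row A" "dim_col A" B "dim_col B" C "dim_col C"]) auto

lemma transpose_mult_dims:
  fixes A B :: "'a :: comm_semiring_0 mat"
  shows "dim_col A = dim_row B \<Longrightarrow> transpose_mat (A * B) = transpose_mat B * transpose_mat A"
  by (rule transpose_mult[of A "dim_row A" "dim_col A" B "dim_col B"]) auto

lemma mult_mat_vec_assoc3:
  fixes A B C :: "'a :: comm_semiring_0 mat"
  assumes "A \<in> carrier_mat a b" "B \<in> carrier_mat b c" "C \<in> carrier_mat c d" "v \<in> carrier_vec d"
  shows "(A * B * C) *\<^sub>v v = A *\<^sub>v (B *\<^sub>v (C *\<^sub>v v))"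
proof -
  have "(A * B * C) *\<^sub>v v = (A * B) *\<^sub>v (C *\<^sub>v v)"
    by (rule assoc_mult_mat_vec) (use assms in auto)
  also have "\<dots> = A *\<^sub>v (B *\<^sub>v (C *\<^sub>v v))"
    by (rule assoc_mult_mat_vec) (use assms in auto)
  finally show ?thesis .
qed

lemma mult_mat_vec_zero_right:
  fixes A :: "'a :: semiring_0 mat"
  shows "A \<in> carrier_mat a b \<Longrightarrow> A *\<^sub>v 0\<^sub>v b = 0\<^sub>v a"
  by (intro eq_vecI) (auto simp: scalar_prod_def)

lemma minv_eq:
  assumes A: "A \<in> carrier_mat a a" and B: "B \<in> carrier_mat a a"
    and AB: "A * B = 1\<^sub>m a" and BA: "B * A = 1\<^sub>m a"
  shows "minv A = B"
  unfolding minv_def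
proof (rule the_equality)
  show "B \<in> carrier_mat (dim_row A) (dim_row A) \<and> A * B = 1\<^sub>m (dim_row A) \<and> B * A = 1\<^sub>m (dim_row A)"
    using A B AB BA by auto
next
  fix C
  assume "C \<in> carrier_mat (dim_row A) (dim_row A) \<and> A * C = 1\<^sub>m (dim_row A) \<and> C * A = 1\<^sub>m (dim_row A)"
  hence C: "C \<in> carrier_mat a a" and CA: "C * A = 1\<^sub>m a" using A by auto
  have "C = C * (A * B)" using C AB by simp
  also have "\<dots> = (C * A) * B" using A B C by simp
  also have "\<dots> = B" using CA B by simp
  finally show "C = B" .
qed

lemma minv_props:
  assumes A: "A \<in> carrier_mat a a" and d: "det A \<noteq> 0"
  shows "minv A \<in> carrier_mat a a" "A * minv A = 1\<^sub>m a" "minv A * A = 1\<^sub>m a"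
proof -
  have "A \<in> Units (ring_mat TYPE(real) a ())" by (rule det_non_zero_imp_unit[OF A d])
  then obtain B where B: "B \<in> carrier_mat a a" "A * B = 1\<^sub>m a" "B * A = 1\<^sub>m a"
    unfolding Units_def ring_mat_simps by auto
  then have "minv A = B" using minv_eq[OF A] by blast
  with B show "minv A \<in> carrier_mat a a" "A * minv A = 1\<^sub>m a" "minv A * A = 1\<^sub>m a" by auto
qed

lemma invertible_of_det:
  fixes A :: "real mat"
  assumes A: "A \<in> carrier_mat a a" and d: "det A \<noteq> 0"
  shows "invertible_mat A"
  using minv_props[OF A d] A
  unfolding invertible_mat_def inverts_mat_def square_mat.simps by auto

lemma minv_mult:
  assumes A: "A \<in> carrier_mat a a" "det A \<noteq> 0" and B: "B \<in> carrier_mat a a" "det B \<noteq> 0"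
  shows "minv (A * B) = minv B * minv A"
proof (rule minv_eq)
  note iA = minv_props[OF A] and iB = minv_props[OF B]
  show "A * B \<in> carrier_mat a a" "minv B * minv A \<in> carrier_mat a a" using A B iA iB by auto
  have [simp]: "B * (minv B * Z) = Z" "minv A * (A * Z) = Z" if "dim_row Z = a" for Z
    using that A B iA iB by (simp_all flip: mult_assoc_dims)
  show "A * B * (minv B * minv A) = 1\<^sub>m a" "minv B * minv A * (A * B) = 1\<^sub>m a"
    using A B iA iB by (simp_all add: mult_assoc_dims)
qed

lemma minv_symmetric:
  assumes A: "A \<in> carrier_mat a a" "det A \<noteq> 0" and sym: "transpose_mat A = A"
  shows "transpose_mat (minv A) = minv A"
proof -
  note iA = minv_props[OF A]
  have "A * transpose_mat (minv A) = transpose_mat (minv A * A)"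
    using A iA(1) sym by (simp add: transpose_mult_dims)
  also have "\<dots> = 1\<^sub>m a" using iA by simp
  finally have right: "A * transpose_mat (minv A) = 1\<^sub>m a" .
  have "transpose_mat (minv A) * A = transpose_mat (A * minv A)"
    using A iA(1) sym by (simp add: transpose_mult_dims)
  also have "\<dots> = 1\<^sub>m a" using iA by simp
  finally have left: "transpose_mat (minv A) * A = 1\<^sub>m a" .
  have "minv A = transpose_mat (minv A)"
    using A iA right left by (intro minv_eq) auto
  then show ?thesis by simp
qed

definition penrose :: "real mat \<Rightarrow> real mat \<Rightarrow> bool" where
  "penrose A X \<longleftrightarrow> X \<in> carrier_mat (dim_col A) (dim_row A)
      \<and> A * X * A = A \<and> X * A * X = X
      \<and> transpose_mat (A * X) = A * X \<and> transpose_mat (X * A) = X * A"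

lemma penrose_unique:
  assumes X: "penrose A X" and Y: "penrose A Y"
  shows "X = Y"
proof -
  have dX: "dim_row X = dim_col A" "dim_col X = dim_row A" using X unfolding penrose_def by auto
  have dY: "dim_row Y = dim_col A" "dim_col Y = dim_row A" using Y unfolding penrose_def by auto
  have X1: "A * (X * A) = A" and X2: "X * (A * X) = X" and X3: "transpose_mat (A * X) = A * X"
    and X4: "transpose_mat (X * A) = X * A"
    using X dX unfolding penrose_def by (auto simp: mult_assoc_dims)
  have Y1: "A * (Y * A) = A" and Y2: "Y * (A * Y) = Y" and Y3: "transpose_mat (A * Y) = A * Y"
    and Y4: "transpose_mat (Y * A) = Y * A"
    using Y dY unfolding penrose_def by (auto simp: mult_assoc_dims)
  have AY: "transpose_mat A = transpose_mat A * (A * Y)"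
  proof -
    have "transpose_mat A = transpose_mat ((A * Y) * A)" using Y1 dY by (simp add: mult_assoc_dims)
    also have "\<dots> = transpose_mat A * transpose_mat (A * Y)" using dY by (simp add: transpose_mult_dims)
    finally show ?thesis using Y3 by simp
  qed
  have XA: "transpose_mat A = (X * A) * transpose_mat A"
  proof -
    have "transpose_mat A = transpose_mat (A * (X * A))" using X1 by simp
    also have "\<dots> = transpose_mat (X * A) * transpose_mat A" using dX by (simp add: transpose_mult_dims)
    finally show ?thesis using X4 by simp
  qed
  have "X = X * transpose_mat (A * X)" using X2 X3 by simp
  also have "\<dots> = X * (transpose_mat X * transpose_mat A)" using dX by (simp add: transpose_mult_dims)
  also have "\<dots> = X * (transpose_mat X * (transpose_mat A * (A * Y)))" using AY by simp
  also have "\<dots> = X * (transpose_mat (A * X) * (A * Y))"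
    using dX dY by (simp add: transpose_mult_dims mult_assoc_dims)
  also have "\<dots> = X * (A * X) * (A * Y)" using X3 dX dY by (simp add: mult_assoc_dims)
  also have "\<dots> = X * A * Y" using X2 dX dY by (simp add: mult_assoc_dims)
  finally have XAY: "X = X * A * Y" .
  have "Y = transpose_mat (Y * A) * Y" using Y2 Y4 dY by (simp add: mult_assoc_dims)
  also have "\<dots> = (transpose_mat A * transpose_mat Y) * Y" using dY by (simp add: transpose_mult_dims)
  also have "\<dots> = ((X * A) * transpose_mat A * transpose_mat Y) * Y" using XA by simp
  also have "\<dots> = (X * A) * transpose_mat (Y * A) * Y"
    using dX dY by (simp add: transpose_mult_dims mult_assoc_dims)
  also have "\<dots> = (X * A) * (Y * A) * Y" using Y4 by simp
  also have "\<dots> = X * A * Y" using Y2 dX dY by (simp add: mult_assoc_dims)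
  finally show ?thesis using XAY by simp
qed

lemma pinv_eqI: "penrose A X \<Longrightarrow> pinv A = X"
  unfolding pinv_def
  by (rule the_equality) (auto simp: penrose_def[symmetric] intro: penrose_unique)

lemma pinv_congruence:
  fixes E M :: "real mat"
  assumes E: "E \<in> carrier_mat n m" and Le: "det (transpose_mat E * E) \<noteq> 0"
    and M: "M \<in> carrier_mat m m" and dM: "det M \<noteq> 0"
  shows "pinv (E * M * transpose_mat E) =
    transpose_mat (minv (transpose_mat E * E) * transpose_mat E) * minv M
    * (minv (transpose_mat E * E) * transpose_mat E)"
proof (rule pinv_eqI)
  define Li where "Li = minv (transpose_mat E * E)"
  have LeC: "transpose_mat E * E \<in> carrier_mat m m" using E by simp
  have Li: "Li \<in> carrier_mat m m" and Li1: "Li * (transpose_mat E * E) = 1\<^sub>m m"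
    and Li2: "(transpose_mat E * E) * Li = 1\<^sub>m m"
    using minv_props[OF LeC Le] unfolding Li_def by auto
  have LiT: "transpose_mat Li = Li"
    unfolding Li_def using E by (intro minv_symmetric[OF LeC Le]) (simp add: transpose_mult_dims)
  note iM = minv_props[OF M dM]
  have d[simp]: "dim_row E = n" "dim_col E = m" "dim_row Li = m" "dim_col Li = m"
    "dim_row M = m" "dim_col M = m" "dim_row (minv M) = m" "dim_col (minv M) = m"
    using E Li M iM by auto
  have [simp]: "Li * (transpose_mat E * (E * Z)) = Z" if "dim_row Z = m" for Z
    using that Li1 by (simp flip: mult_assoc_dims)
  have [simp]: "transpose_mat E * (E * (Li * Z)) = Z" if "dim_row Z = m" for Z
    using that Li2 by (simp flip: mult_assoc_dims)
  have [simp]: "M * (minv M * Z) = Z" if "dim_row Z = m" for Z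
    using that iM by (simp flip: mult_assoc_dims)
  have [simp]: "minv M * (M * Z) = Z" if "dim_row Z = m" for Z
    using that iM by (simp flip: mult_assoc_dims)
  show "penrose (E * M * transpose_mat E)
      (transpose_mat (Li * transpose_mat E) * minv M * (Li * transpose_mat E))"
    unfolding penrose_def
    by (intro conjI; (rule carrier_matI)?) (simp_all add: mult_assoc_dims transpose_mult_dims LiT)
qed

section \<open>Kernel of a Laplacian-like matrix with a simple zero eigenvalue\<close>

text \<open>A nonzero kernel vector vanishing at position \<open>i\<close> restricts to a nonzero kernel vector
  of the principal submatrix obtained by deleting row and column \<open>i\<close>.\<close>

lemma principal_minor_singular:
  fixes L :: "'a :: field mat"
  assumes L: "L \<in> carrier_mat (Suc n) (Suc n)" and i: "i < Suc n"
    and w: "w \<in> carrier_vec (Suc n)" and Lw: "L *\<^sub>v w = 0\<^sub>v (Suc n)"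
    and wi: "w $ i = 0" and nz: "w \<noteq> 0\<^sub>v (Suc n)"
  shows "poly (char_poly (mat_delete L i i)) 0 = 0"
proof -
  define B where "B = mat_delete L i i"
  have B: "B \<in> carrier_mat n n" using mat_delete_carrier[OF L] by (simp add: B_def)
  define w' where "w' = vec n (\<lambda>r. w $ insert_index i r)"
  have skip_i: "(\<Sum>c\<in>{0..<Suc n}. f c) = f i + (\<Sum>c\<in>{0..<n}. f (insert_index i c))"
    for f :: "nat \<Rightarrow> 'a"
    using sum.remove[of "{0..<Suc n}" i f] i
    by (simp add: insert_index_image[OF i, symmetric] sum.reindex[OF insert_index_inj_on])
  have "B *\<^sub>v w' = 0\<^sub>v n"
  proof (rule eq_vecI)
    fix r assume "r < dim_vec (0\<^sub>v n :: 'a vec)"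
    hence r: "r < n" by simp
    have ir: "insert_index i r < Suc n" using r by (simp add: insert_index_def)
    have "(B *\<^sub>v w') $ r = (\<Sum>c\<in>{0..<n}. B $$ (r, c) * w' $ c)"
      using r B by (simp add: scalar_prod_def w'_def)
    also have "\<dots> = (\<Sum>c\<in>{0..<n}. L $$ (insert_index i r, insert_index i c) * w $ insert_index i c)"
      using r by (intro sum.cong) (simp_all add: B_def w'_def mat_delete_index[OF L i i r, symmetric])
    also have "\<dots> = (\<Sum>c\<in>{0..<Suc n}. L $$ (insert_index i r, c) * w $ c)"
      using skip_i[of "\<lambda>c. L $$ (insert_index i r, c) * w $ c"] wi by simp
    also have "\<dots> = (L *\<^sub>v w) $ insert_index i r" using L w ir by (simp add: scalar_prod_def)
    finally show "(B *\<^sub>v w') $ r = 0\<^sub>v n $ r" using Lw ir r by simp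
  qed (use B in simp)
  moreover have "w' \<noteq> 0\<^sub>v n"
  proof -
    obtain j where j: "j < Suc n" "w $ j \<noteq> 0" using nz w by (metis eq_vecI carrier_vecD index_zero_vec)
    have ji: "j \<noteq> i" using j wi by auto
    have "delete_index i j < n" using j ji i by (auto simp: delete_index_def)
    moreover have "w' $ delete_index i j = w $ j"
      using calculation ji by (simp add: w'_def insert_delete_index)
    ultimately show ?thesis using j by auto
  qed
  ultimately have "eigenvector B w' 0"
    using B by (auto simp: eigenvector_def w'_def)
  then show ?thesis
    using eigenvalue_root_char_poly[OF B] unfolding B_def eigenvalue_def by blast
qed

text \<open>If \<open>L 1 = 0\<close> and \<open>L\<close> has a nonconstant kernel vector, every principal minor is
  singular; so the derivative of the characteristic polynomial vanishes at 0, which makes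
  0 a multiple root.\<close>

lemma nonconstant_kernel_multiple_root:
  fixes L :: "real mat"
  assumes L: "L \<in> carrier_mat n n"
    and L1: "L *\<^sub>v vec n (\<lambda>_. 1) = 0\<^sub>v n" and Ly: "L *\<^sub>v y = 0\<^sub>v n" and y: "y \<in> carrier_vec n"
    and nc: "\<And>i. i < n \<Longrightarrow> \<exists>j<n. y $ j \<noteq> y $ i"
  shows "order 0 (char_poly L) \<noteq> 1"
proof
  assume ord: "order 0 (char_poly L) = 1"
  let ?p = "char_poly L"
  have dm: "degree ?p = n" "coeff ?p n = 1" using degree_monic_char_poly[OF L] by auto
  have root: "poly ?p 0 = 0" using ord order_root[of ?p 0] by simp
  have "order 0 ?p = Suc (order 0 (pderiv ?p))" by (rule order_pderiv) (use dm root in auto)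
  hence od: "order 0 (pderiv ?p) = 0" using ord by simp
  have minor: "poly (char_poly (mat_delete L i i)) 0 = 0" if i: "i < n" for i
  proof -
    obtain n' where n': "n = Suc n'" using i by (cases n) auto
    obtain j where j: "j < n" "y $ j \<noteq> y $ i" using nc[OF i] by blast
    define w where "w = vec n (\<lambda>c. y $ c - y $ i)"
    have "(L *\<^sub>v w) $ r = (L *\<^sub>v y) $ r - y $ i * (L *\<^sub>v vec n (\<lambda>_. 1)) $ r" if "r < n" for r
      using L y that by (simp add: w_def scalar_prod_def algebra_simps sum_subtractf sum_distrib_left)
    then have "L *\<^sub>v w = 0\<^sub>v n" using Ly L1 L by (intro eq_vecI) auto
    moreover have "w \<noteq> 0\<^sub>v n" using j by (metis index_vec index_zero_vec(1) right_minus_eq w_def)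
    ultimately show ?thesis
      using principal_minor_singular[of L n' i w] L i by (simp add: n' w_def)
  qed
  have "poly (pderiv ?p) 0 = (\<Sum>i<n. poly (char_poly (mat_delete L i i)) 0)"
    unfolding pderiv_char_poly[OF L] poly_sum ..
  also have "\<dots> = 0" using minor by simp
  finally have "pderiv ?p = 0" using od order_root by metis
  hence "n = 0" using dm by (simp add: pderiv_eq_0_iff)
  hence "poly ?p 0 = 1" using dm by (simp add: poly_0_coeff_0)
  with root show False by simp
qed

lemma simple_zero_eigenvalue_kernel:
  fixes L :: "real mat"
  assumes L: "L \<in> carrier_mat n n" and L1: "L *\<^sub>v vec n (\<lambda>_. 1) = 0\<^sub>v n"
    and simple: "order 0 (char_poly L) = 1"
    and y: "y \<in> carrier_vec n" and Ly: "L *\<^sub>v y = 0\<^sub>v n"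
  shows "\<exists>c. y = vec n (\<lambda>_. c)"
proof (rule ccontr)
  assume const: "\<nexists>c. y = vec n (\<lambda>_. c)"
  have "\<exists>j<n. y $ j \<noteq> y $ i" if "i < n" for i
  proof (rule ccontr)
    assume "\<not> (\<exists>j<n. y $ j \<noteq> y $ i)"
    then have "y = vec n (\<lambda>_. y $ i)" using y by (intro eq_vecI) auto
    with const show False by blast
  qed
  with nonconstant_kernel_multiple_root[OF L L1 Ly y] simple show False by blast
qed

text \<open>Consequently the core \<open>M\<close> of a congruence \<open>E M E\<^sup>T\<close> is nonsingular when \<open>E\<^sup>T E\<close> is
  invertible, \<open>E\<^sup>T\<close> kills constant vectors and 0 is a simple eigenvalue of \<open>E M E\<^sup>T\<close>:
  a kernel vector \<open>z\<close> of \<open>M\<close> lifts to the kernel vector \<open>E (E\<^sup>T E)\<inverse> z\<close> of \<open>E M E\<^sup>T\<close>.\<close>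

lemma congruence_core_nonsingular:
  fixes E M :: "real mat"
  assumes E: "E \<in> carrier_mat n m" and Le: "det (transpose_mat E * E) \<noteq> 0"
    and M: "M \<in> carrier_mat m m"
    and const: "\<And>c. transpose_mat E *\<^sub>v vec n (\<lambda>_. c) = 0\<^sub>v m"
    and simple: "order 0 (char_poly (E * M * transpose_mat E)) = 1"
  shows "det M \<noteq> 0"
proof
  let ?L = "E * M * transpose_mat E" and ?Li = "minv (transpose_mat E * E)"
  have ET: "transpose_mat E \<in> carrier_mat m n" using E by simp
  have L: "?L \<in> carrier_mat n n" using E M by simp
  have Li: "?Li \<in> carrier_mat m m" "transpose_mat E * E * ?Li = 1\<^sub>m m"
    using minv_props[of "transpose_mat E * E" m] E Le by auto
  have L1: "?L *\<^sub>v vec n (\<lambda>_. 1) = 0\<^sub>v n"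
    using mult_mat_vec_assoc3[OF E M ET] const E M by (simp add: mult_mat_vec_zero_right)
  assume "det M = 0"
  then obtain z where z: "z \<in> carrier_vec m" "z \<noteq> 0\<^sub>v m" and Mz: "M *\<^sub>v z = 0\<^sub>v m"
    unfolding det_0_iff_vec_prod_zero[OF M] by blast
  define y where "y = E *\<^sub>v (?Li *\<^sub>v z)"
  have y: "y \<in> carrier_vec n" unfolding y_def using E Li z by simp
  have Ey: "transpose_mat E *\<^sub>v y = z"
    using mult_mat_vec_assoc3[OF ET E Li(1) z(1)] Li(2) z unfolding y_def by simp
  have "?L *\<^sub>v y = 0\<^sub>v n"
    using mult_mat_vec_assoc3[OF E M ET y] Ey Mz E by (simp add: mult_mat_vec_zero_right)
  then obtain c where "y = vec n (\<lambda>_. c)"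
    using simple_zero_eigenvalue_kernel[OF L L1 simple y] by blast
  then have "z = 0\<^sub>v m" using Ey const by simp
  with z(2) show False ..
qed

section \<open>Incidence matrices of trees\<close>

abbreviation loopless_edges :: "nat \<Rightarrow> (nat \<times> nat) list \<Rightarrow> bool" where
  "loopless_edges n es \<equiv> \<forall>(u,v)\<in>set es. u < n \<and> v < n \<and> u \<noteq> v"

lemma incidence_carrier[simp]: "incidence n es \<in> carrier_mat n (length es)"
  unfolding incidence_def by auto

lemma incidence_dims[simp]:
  "dim_row (incidence n es) = n" "dim_col (incidence n es) = length es"
  unfolding incidence_def by auto

lemma incidence_index[simp]:
  "i < n \<Longrightarrow> k < length es \<Longrightarrow> incidence n es $$ (i,k) =
   (if fst (es ! k) = i then 1 else if snd (es ! k) = i then -1 else 0)"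
  unfolding incidence_def by auto

lemma loopless_edgeD:
  "loopless_edges n es \<Longrightarrow> k < length es \<Longrightarrow>
     fst (es ! k) < n \<and> snd (es ! k) < n \<and> fst (es ! k) \<noteq> snd (es ! k)"
  using nth_mem[of k es] by (auto simp: case_prod_beta)

lemma sum_incidence_column:
  assumes "finite B" "f \<noteq> s"
  shows "(\<Sum>i\<in>B. (if f = i then 1 else if s = i then -1 else 0::real)) =
     (if f \<in> B then 1 else 0) - (if s \<in> B then 1 else 0)"
proof -
  have "(\<Sum>i\<in>B. (if f = i then 1 else if s = i then -1 else 0::real)) =
     (\<Sum>i\<in>B. (if f = i then 1 else 0) - (if s = i then 1 else 0))"
    by (rule sum.cong) (use assms in auto)
  then show ?thesis using assms(1) by (simp add: sum_subtractf)
qed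

lemma incidence_transpose_const:
  assumes "loopless_edges n es"
  shows "transpose_mat (incidence n es) *\<^sub>v vec n (\<lambda>_. c) = 0\<^sub>v (length es)"
proof (rule eq_vecI)
  fix p assume "p < dim_vec (0\<^sub>v (length es) :: real vec)"
  hence p: "p < length es" by simp
  note e = loopless_edgeD[OF assms p]
  have "(transpose_mat (incidence n es) *\<^sub>v vec n (\<lambda>_. c)) $ p
     = (\<Sum>i\<in>{0..<n}. (if fst (es ! p) = i then 1 else if snd (es ! p) = i then -1 else 0)) * c"
    using p by (simp add: scalar_prod_def sum_distrib_right)
  also have "\<dots> = 0" using e by (simp add: sum_incidence_column)
  finally show "(transpose_mat (incidence n es) *\<^sub>v vec n (\<lambda>_. c)) $ p = 0\<^sub>v (length es) $ p"
    using p by simp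
qed simp

lemma nth_in_remove_nth:
  assumes "q < length xs" "q \<noteq> p"
  shows "xs ! q \<in> set (take p xs @ drop (Suc p) xs)"
proof (cases "q < p")
  case True
  then show ?thesis using assms by (metis Un_iff length_take min_less_iff_conj nth_mem nth_take set_append)
next
  case False
  then have "drop (Suc p) xs ! (q - Suc p) = xs ! q" "q - Suc p < length (drop (Suc p) xs)"
    using assms by auto
  then show ?thesis by (metis Un_iff nth_mem set_append)
qed

text \<open>Fundamental cut of a tree edge \<open>p\<close>: the vertices reachable from its tail without
  using \<open>p\<close> form a set \<open>S\<close> that \<open>p\<close> leaves and every other tree edge stays inside or
  outside of; so the sum over \<open>S\<close> of column \<open>q\<close> of \<open>E\<^sub>T\<close> is the Kronecker delta.\<close>

lemma tree_edge_cut: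
  assumes ac: "acyclic_graph eT" and valid: "loopless_edges n eT" and p: "p < length eT"
  shows "\<exists>S \<subseteq> {..<n}. \<forall>q < length eT.
           (\<Sum>i\<in>S. incidence n eT $$ (i,q)) = (if q = p then 1 else 0)"
proof -
  define rest where "rest = take p eT @ drop (Suc p) eT"
  define C where "C = {i. (fst (eT ! p), i) \<in> (edge_adj rest)\<^sup>*}"
  have head: "snd (eT ! p) \<notin> C" using ac p unfolding acyclic_graph_def C_def rest_def by auto
  have tail: "fst (eT ! p) \<in> C" unfolding C_def by simp
  have closed: "fst (eT ! q) \<in> C \<longleftrightarrow> snd (eT ! q) \<in> C" if "q < length eT" "q \<noteq> p" for q
  proof -
    obtain x y where xy: "eT ! q = (x,y)" by fastforce
    have "(x,y) \<in> set rest" using nth_in_remove_nth[OF that] xy unfolding rest_def by simp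
    hence "(x,y) \<in> edge_adj rest" "(y,x) \<in> edge_adj rest" unfolding edge_adj_def by auto
    then show ?thesis unfolding xy C_def by (auto intro: rtrancl_into_rtrancl)
  qed
  have "(\<Sum>i\<in>C \<inter> {..<n}. incidence n eT $$ (i,q)) = (if q = p then 1 else 0)"
    if q: "q < length eT" for q
  proof -
    note e = loopless_edgeD[OF valid q]
    have "(\<Sum>i\<in>C \<inter> {..<n}. incidence n eT $$ (i,q)) =
       (\<Sum>i\<in>C \<inter> {..<n}. (if fst (eT ! q) = i then 1 else if snd (eT ! q) = i then -1 else 0))"
      by (rule sum.cong) (use q in auto)
    also have "\<dots> = (if fst (eT ! q) \<in> C then 1 else 0) - (if snd (eT ! q) \<in> C then 1 else 0)"
      using e by (simp add: sum_incidence_column)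
    also have "\<dots> = (if q = p then 1 else 0)" using closed[OF q] head tail by auto
    finally show ?thesis .
  qed
  then show ?thesis by (intro exI[of _ "C \<inter> {..<n}"]) auto
qed

text \<open>The incidence matrix of an acyclic graph is injective: summing the entries of
  \<open>E\<^sub>T z\<close> over the fundamental cut of edge \<open>p\<close> yields \<open>z\<^sub>p\<close>.\<close>

lemma tree_incidence_injective:
  assumes ac: "acyclic_graph eT" and valid: "loopless_edges n eT"
    and z: "z \<in> carrier_vec (length eT)" and Ez: "incidence n eT *\<^sub>v z = 0\<^sub>v n"
  shows "z = 0\<^sub>v (length eT)"
proof (rule eq_vecI)
  fix p assume "p < dim_vec (0\<^sub>v (length eT) :: real vec)"
  hence p: "p < length eT" by simp
  obtain S where S: "S \<subseteq> {..<n}"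
    and cut: "\<And>q. q < length eT \<Longrightarrow> (\<Sum>i\<in>S. incidence n eT $$ (i,q)) = (if q = p then 1 else 0)"
    using tree_edge_cut[OF ac valid p] by blast
  have fin: "finite S" using S finite_subset by blast
  have "0 = (\<Sum>i\<in>S. (incidence n eT *\<^sub>v z) $ i)"
    using Ez S by (simp add: subset_iff)
  also have "\<dots> = (\<Sum>i\<in>S. \<Sum>q\<in>{0..<length eT}. incidence n eT $$ (i,q) * z $ q)"
    by (rule sum.cong) (use z S in \<open>auto simp: scalar_prod_def\<close>)
  also have "\<dots> = (\<Sum>q\<in>{0..<length eT}. (\<Sum>i\<in>S. incidence n eT $$ (i,q)) * z $ q)"
    by (subst sum.swap) (simp add: sum_distrib_right)
  also have "\<dots> = (\<Sum>q\<in>{0..<length eT}. if q = p then z $ q else 0)"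
    by (rule sum.cong) (simp_all add: cut)
  also have "\<dots> = z $ p" using p by simp
  finally show "z $ p = 0\<^sub>v (length eT) $ p" using p by simp
qed (use z in simp)

lemma self_scalar_zero:
  assumes y: "(y :: real vec) \<in> carrier_vec n" and yy: "y \<bullet> y = 0"
  shows "y = 0\<^sub>v n"
proof (rule eq_vecI)
  have "(\<Sum>i\<in>{0..<n}. y $ i * y $ i) = 0" using yy y by (simp add: scalar_prod_def)
  then have "\<forall>i\<in>{0..<n}. y $ i * y $ i = 0"
    by (subst sum_nonneg_eq_0_iff[symmetric]) auto
  then show "\<And>i. i < dim_vec (0\<^sub>v n) \<Longrightarrow> y $ i = 0\<^sub>v n $ i" by auto
qed (use y in auto)

lemma tree_edge_laplacian_det:
  assumes ac: "acyclic_graph eT" and valid: "loopless_edges n eT"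
  shows "det (transpose_mat (incidence n eT) * incidence n eT) \<noteq> 0"
proof
  let ?E = "incidence n eT" and ?m = "length eT"
  have Le: "transpose_mat ?E * ?E \<in> carrier_mat ?m ?m" by (rule mult_carrier_mat[of _ _ n]) auto
  assume "det (transpose_mat ?E * ?E) = 0"
  then obtain z where z: "z \<in> carrier_vec ?m" "z \<noteq> 0\<^sub>v ?m"
    and Lz: "(transpose_mat ?E * ?E) *\<^sub>v z = 0\<^sub>v ?m"
    unfolding det_0_iff_vec_prod_zero[OF Le] by blast
  define y where "y = ?E *\<^sub>v z"
  have y: "y \<in> carrier_vec n" unfolding y_def by (rule mult_mat_vec_carrier[OF incidence_carrier z(1)])
  have "transpose_mat ?E *\<^sub>v y = 0\<^sub>v ?m"
    using Lz assoc_mult_mat_vec[OF _ incidence_carrier z(1), of "transpose_mat ?E" ?m]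
    unfolding y_def by simp
  then have "y \<bullet> y = 0"
    using transpose_vec_mult_scalar[OF incidence_carrier z(1) y] z unfolding y_def by simp
  then have "?E *\<^sub>v z = 0\<^sub>v n" using self_scalar_zero[OF y] unfolding y_def by simp
  with z show False using tree_incidence_injective[OF ac valid z(1)] by simp
qed

section \<open>Cycle edges lie in the span of the tree edges\<close>

definition vertex_difference :: "nat \<Rightarrow> nat \<Rightarrow> nat \<Rightarrow> real vec" where
  "vertex_difference n a b = vec n (\<lambda>i. (if i = a then 1 else 0) - (if i = b then 1 else 0))"

lemma incidence_column:
  assumes "q < length es" "fst (es ! q) \<noteq> snd (es ! q)"
  shows "incidence n es *\<^sub>v unit_vec (length es) q = vertex_difference n (fst (es ! q)) (snd (es ! q))"
  by (rule eq_vecI) (use assms in \<open>auto simp: vertex_difference_def\<close>)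

text \<open>Along a walk from \<open>a\<close> to \<open>b\<close> the signed sum of the traversed edge columns
  telescopes to \<open>e\<^sub>a - e\<^sub>b\<close>.\<close>

lemma walk_in_incidence_range:
  assumes valid: "loopless_edges n es" and walk: "(a,b) \<in> (edge_adj es)\<^sup>*"
  shows "\<exists>z \<in> carrier_vec (length es). incidence n es *\<^sub>v z = vertex_difference n a b"
  using walk
proof (induction rule: rtrancl_induct)
  case base
  have "incidence n es *\<^sub>v 0\<^sub>v (length es) = vertex_difference n a a"
    by (rule eq_vecI) (auto simp: vertex_difference_def)
  then show ?case by (intro bexI[of _ "0\<^sub>v (length es)"]) auto
next
  case (step b c)
  let ?E = "incidence n es" and ?m = "length es"
  from step.IH obtain z where z: "z \<in> carrier_vec ?m"
    and Ez: "?E *\<^sub>v z = vertex_difference n a b" by blast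
  from step.hyps(2) obtain q where q: "q < ?m" and "es ! q = (b,c) \<or> es ! q = (c,b)"
    unfolding edge_adj_def by (auto simp: in_set_conv_nth)
  have column: "?E *\<^sub>v unit_vec ?m q = vertex_difference n (fst (es ! q)) (snd (es ! q))"
    using incidence_column[OF q] loopless_edgeD[OF valid q] by simp
  from \<open>es ! q = (b,c) \<or> es ! q = (c,b)\<close> consider "es ! q = (b,c)" | "es ! q = (c,b)" by blast
  then show ?case
  proof cases
    case 1
    have "?E *\<^sub>v (z + unit_vec ?m q) = ?E *\<^sub>v z + ?E *\<^sub>v unit_vec ?m q"
      by (rule mult_add_distrib_mat_vec[OF incidence_carrier z]) simp
    also have "\<dots> = vertex_difference n a c"
      unfolding Ez column using 1 loopless_edgeD[OF valid q]
      by (intro eq_vecI) (auto simp: vertex_difference_def)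
    finally show ?thesis using z by (intro bexI[of _ "z + unit_vec ?m q"]) auto
  next
    case 2
    have "?E *\<^sub>v (z - unit_vec ?m q) = ?E *\<^sub>v z - ?E *\<^sub>v unit_vec ?m q"
      by (rule mult_minus_distrib_mat_vec[OF incidence_carrier z]) simp
    also have "\<dots> = vertex_difference n a c"
      unfolding Ez column using 2 loopless_edgeD[OF valid q]
      by (intro eq_vecI) (auto simp: vertex_difference_def)
    finally show ?thesis using z by (intro bexI[of _ "z - unit_vec ?m q"]) auto
  qed
qed

text \<open>For a connected tree, \<open>E\<^sub>C = E\<^sub>T Z\<close> for some \<open>Z\<close>: each column of \<open>E\<^sub>C\<close> is realized by
  the tree walk between the endpoints of the corresponding edge.\<close>

lemma connected_incidence_spans:
  assumes valid: "loopless_edges n eT" and conn: "graph_connected n eT"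
    and validC: "loopless_edges n eC"
  shows "\<exists>Z \<in> carrier_mat (length eT) (length eC). incidence n eT * Z = incidence n eC"
proof -
  let ?m = "length eT" and ?dif = "\<lambda>j. vertex_difference n (fst (eC ! j)) (snd (eC ! j))"
  have "\<exists>z \<in> carrier_vec ?m. incidence n eT *\<^sub>v z = ?dif j" if j: "j < length eC" for j
    using walk_in_incidence_range[OF valid] conn loopless_edgeD[OF validC j]
    unfolding graph_connected_def by blast
  then obtain zf where zf: "\<And>j. j < length eC \<Longrightarrow>
      zf j \<in> carrier_vec ?m \<and> incidence n eT *\<^sub>v zf j = ?dif j"
    by metis
  define Z where "Z = mat ?m (length eC) (\<lambda>(p,j). zf j $ p)"
  have colZ: "col Z j = zf j" if "j < length eC" for j
    using zf[OF that] that by (intro eq_vecI) (auto simp: Z_def)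
  have "incidence n eT * Z = incidence n eC"
  proof (rule eq_matI)
    fix i j assume "i < dim_row (incidence n eC)" "j < dim_col (incidence n eC)"
    then have i: "i < n" and j: "j < length eC" by auto
    have "(incidence n eT * Z) $$ (i,j) = (incidence n eT *\<^sub>v zf j) $ i"
      using i j colZ[OF j] by (simp add: Z_def)
    also have "\<dots> = incidence n eC $$ (i,j)"
      using zf[OF j] i j loopless_edgeD[OF validC j] by (auto simp: vertex_difference_def)
    finally show "(incidence n eT * Z) $$ (i,j) = incidence n eC $$ (i,j)" .
  qed (auto simp: Z_def)
  then show ?thesis by (intro bexI[of _ Z]) (simp_all add: Z_def)
qed

section \<open>The factorization \<open>E = E\<^sub>T R\<close>\<close>

lemma append_cols_dims[simp]:
  "dim_row (append_cols A B) = dim_row A" "dim_col (append_cols A B) = dim_col A + dim_col B"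
  unfolding append_cols_def by auto

lemma mult_append_cols:
  assumes A: "A \<in> carrier_mat r a" and B: "B \<in> carrier_mat a b" and C: "C \<in> carrier_mat a c"
  shows "A * append_cols B C = append_cols (A * B) (A * C)"
proof (rule eq_matI)
  fix i j assume "i < dim_row (append_cols (A * B) (A * C))" "j < dim_col (append_cols (A * B) (A * C))"
  hence i: "i < r" and j: "j < b + c" using A B C by auto
  have "col (append_cols B C) j = (if j < b then col B j else col C (j - b))"
    using B C j by (intro eq_vecI) (auto simp: append_cols_def)
  then show "(A * append_cols B C) $$ (i, j) = append_cols (A * B) (A * C) $$ (i, j)"
    using i j A B C by (auto simp: append_cols_def)
qed (use A B C in auto)

lemma incidence_append:
  "incidence n (eT @ eC) = append_cols (incidence n eT) (incidence n eC)"
  by (rule eq_matI) (auto simp: append_cols_def incidence_def nth_append)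

text \<open>\<open>R\<close> is an \<open>|T| \<times> (|T| + |C|)\<close> matrix, whatever the value of the inverse.\<close>

lemma R_TC_carrier: "R_TC n eT eC \<in> carrier_mat (length eT) (length eT + length eC)"
  unfolding R_TC_def by (rule carrier_matI) simp_all

text \<open>Since \<open>E\<^sub>C = E\<^sub>T Z\<close>, the projection \<open>E\<^sub>T L\<^sub>e(T)\<inverse> E\<^sub>T\<^sup>T\<close> onto the range of \<open>E\<^sub>T\<close> fixes
  \<open>E\<^sub>C\<close>; hence \<open>E = [E\<^sub>T E\<^sub>C] = E\<^sub>T [I, L\<^sub>e(T)\<inverse> E\<^sub>T\<^sup>T E\<^sub>C] = E\<^sub>T R\<close>.\<close>

lemma incidence_tree_factorization:
  assumes valid: "loopless_edges n eT" and tree: "spanning_tree n eT"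
    and validC: "loopless_edges n eC"
  shows "incidence n (eT @ eC) = incidence n eT * R_TC n eT eC"
proof -
  let ?ET = "incidence n eT" and ?EC = "incidence n eC" and ?m = "length eT"
  let ?Li = "minv (transpose_mat ?ET * ?ET)"
  have Le: "transpose_mat ?ET * ?ET \<in> carrier_mat ?m ?m" by (rule mult_carrier_mat[of _ _ n]) auto
  have Li: "?Li \<in> carrier_mat ?m ?m" "?Li * (transpose_mat ?ET * ?ET) = 1\<^sub>m ?m"
    using minv_props[OF Le tree_edge_laplacian_det] valid tree
    unfolding spanning_tree_def by auto
  obtain Z where Z: "Z \<in> carrier_mat ?m (length eC)" and ETZ: "?ET * Z = ?EC"
    using connected_incidence_spans[OF valid _ validC] tree unfolding spanning_tree_def by blast
  have "?ET * (?Li * transpose_mat ?ET * ?EC) = ?ET * (?Li * (transpose_mat ?ET * ?ET)) * Z"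
    unfolding ETZ[symmetric] using Li(1) Z by (simp add: mult_assoc_dims)
  then have ETX: "?ET * (?Li * transpose_mat ?ET * ?EC) = ?EC" using Li ETZ Z by simp
  have X: "?Li * transpose_mat ?ET * ?EC \<in> carrier_mat ?m (length eC)"
    using Li(1) by (intro mult_carrier_mat[of _ _ n] mult_carrier_mat[of _ _ ?m]) auto
  show ?thesis
    unfolding incidence_append R_TC_def edge_laplacian_T_def
    using mult_append_cols[OF incidence_carrier one_carrier_mat X] ETX by simp
qed

section \<open>The pseudo-inverse of the graph Laplacian\<close>

text \<open>With \<open>E = E\<^sub>T R\<close> the Laplacian is the congruence \<open>L(G) = E\<^sub>T M E\<^sub>T\<^sup>T\<close>, \<open>M = R W R\<^sup>T\<close>;
  simplicity of the zero eigenvalue makes \<open>M\<close> nonsingular, and \<open>L\<^sub>e\<^sub>s\<^sub>s(T) = L\<^sub>e(T) M\<close>.\<close>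

theorem proposition2:
  fixes n :: nat and eT eC :: "(nat \<times> nat) list" and wT wC :: "real list"
  assumes "simple_graph n (eT @ eC)"
    and "length wT = length eT" and "length wC = length eC"
    and "\<forall>w \<in> set (wT @ wC). w \<noteq> 0"
    and "graph_connected n (eT @ eC)"
    and "order 0 (char_poly (laplacian n (eT @ eC) (wT @ wC))) = 1"
    and "spanning_tree n eT"
  shows "invertible_mat (R_TC n eT eC * weight_mat (wT @ wC) * transpose_mat (R_TC n eT eC))
    \<and> invertible_mat (L_ess n eT eC (wT @ wC))
    \<and> pinv (laplacian n (eT @ eC) (wT @ wC)) =
        transpose_mat (left_inv_T n eT)
        * minv (R_TC n eT eC * weight_mat (wT @ wC) * transpose_mat (R_TC n eT eC))
        * left_inv_T n eT
    \<and> pinv (laplacian n (eT @ eC) (wT @ wC)) =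
        transpose_mat (left_inv_T n eT) * minv (L_ess n eT eC (wT @ wC))
        * transpose_mat (incidence n eT)"
proof -
  let ?ET = "incidence n eT" and ?m = "length eT" and ?R = "R_TC n eT eC"
  let ?M = "?R * weight_mat (wT @ wC) * transpose_mat ?R" and ?Le = "transpose_mat ?ET * ?ET"
  have validT: "loopless_edges n eT" and validC: "loopless_edges n eC"
    using assms(1) unfolding simple_graph_def by auto
  have detLe: "det ?Le \<noteq> 0"
    using tree_edge_laplacian_det[OF _ validT] assms(7) unfolding spanning_tree_def by blast
  have Le: "?Le \<in> carrier_mat ?m ?m" by (rule mult_carrier_mat[of _ _ n]) auto
  have W: "weight_mat (wT @ wC) \<in> carrier_mat (?m + length eC) (?m + length eC)"
    using assms(2,3) by (simp add: weight_mat_def)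
  have M: "?M \<in> carrier_mat ?m ?m"
    using R_TC_carrier[of n eT eC] W by (metis mult_carrier_mat transpose_carrier_mat)
  have Lap: "laplacian n (eT @ eC) (wT @ wC) = ?ET * ?M * transpose_mat ?ET"
    unfolding laplacian_def incidence_tree_factorization[OF validT assms(7) validC]
    using R_TC_carrier[of n eT eC] W by (simp add: mult_assoc_dims transpose_mult_dims)
  have detM: "det ?M \<noteq> 0"
    using congruence_core_nonsingular[OF incidence_carrier detLe M
        incidence_transpose_const[OF validT]] assms(6) unfolding Lap by blast
  have Less: "L_ess n eT eC (wT @ wC) = ?Le * ?M"
    unfolding L_ess_def edge_laplacian_T_def ..
  have "pinv (laplacian n (eT @ eC) (wT @ wC)) =
      transpose_mat (left_inv_T n eT) * minv ?M * left_inv_T n eT"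
    unfolding Lap left_inv_T_def edge_laplacian_T_def
    by (rule pinv_congruence[OF incidence_carrier detLe M detM])
  moreover have "transpose_mat (left_inv_T n eT) * minv (?Le * ?M) * transpose_mat ?ET
      = transpose_mat (left_inv_T n eT) * minv ?M * left_inv_T n eT"
    unfolding minv_mult[OF Le detLe M detM] left_inv_T_def edge_laplacian_T_def
    using minv_props[OF Le detLe] minv_props[OF M detM]
    by (simp add: mult_assoc_dims transpose_mult_dims)
  ultimately show ?thesis
    unfolding Less using invertible_of_det[OF M detM] invertible_of_det[of "?Le * ?M" ?m]
      Le M detLe detM by (simp add: det_mult[OF Le M])
qed

end
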